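(* Let $f:\mathbb{R}^n\to\overline{\mathbb{R}}$ be $\mathcal{C}^2$-smooth around $\bar x$ and $g:\mathbb{R}^n\to\overline{\mathbb{R}}$ proper lower semicontinuous. Then for any $\bar v\in\partial g(\bar x)$ we have $\nabla f(\bar x)+\bar v\in\partial(f+g)(\bar x)$ and $\mathrm{quad}(f+g)(\bar x|\nabla f(\bar x)+\bar v)=\tfrac12q_{\nabla^2f(\bar x)}+\mathrm{quad}\,g(\bar x|\bar v)$, i.e. the set of functions $\tfrac12q_{\nabla^2f(\bar x)}+p$ with $p\in\mathrm{quad}\,g(\bar x|\bar v)$. In particular, $\mathrm{quad}\,f(\bar x|\nabla f(\bar x))=\{\tfrac12d^2f(\bar x|\nabla f(\bar x))\}=\{\tfrac12q_{\nabla^2f(\bar x)}\}$.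
   Context: $q_A(x)=\langle x,Ax\rangle$. $\partial$ is the limiting subdifferential. $d^2h(x|v)(w)=\liminf_{t\downarrow0,w'\to w}\frac{h(x+tw')-h(x)-t\langle v,w'\rangle}{\frac12t^2}$; twice epi-differentiability at $x$ for $v$ means these quotients epi-converge as $t\downarrow0$. A generalized quadratic form is $\frac12q_A+\delta_L$ with $A$ symmetric, $L$ a linear subspace. $h$ is generalized twice differentiable at $x$ for $v\in\partial h(x)$ if twice epi-differentiable there with $d^2h(x|v)$ a generalized quadratic form. $\Omega_h=\{(x,v)\in\operatorname{gph}\partial h:h$ generalized twice differentiable at $x$ for $v\}$. The quadratic bundle $\mathrm{quad}\,h(\bar x|\bar v)$ is the set of generalized quadratic forms $q$ for which there exist $(x_k,v_k)\in\Omega_h$, $(x_k,v_k)\to(\bar x,\bar v)$, $h(x_k)\to h(\bar x)$, with $\frac12d^2h(x_k|v_k)$ epi-converging to $q$. *)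

theory Defs
  imports "HOL-Analysis.Analysis"
begin

type_synonym 'n efun = "real^'n \<Rightarrow> ereal"

definition proper_fun :: "'n::finite efun \<Rightarrow> bool" where
  "proper_fun h \<longleftrightarrow> (\<forall>x. h x \<noteq> -\<infinity>) \<and> (\<exists>x. h x \<noteq> \<infinity>)"

definition lsc_fun :: "'n::finite efun \<Rightarrow> bool" where
  "lsc_fun h \<longleftrightarrow> (\<forall>x. h x \<le> Liminf (at x) h)"

definition C2_around :: "'n::finite efun \<Rightarrow> real^'n \<Rightarrow> (real^'n \<Rightarrow> real^'n)
    \<Rightarrow> (real^'n \<Rightarrow> real^'n^'n) \<Rightarrow> bool" where
  "C2_around f xb G H \<longleftrightarrow> (\<exists>U f0. open U \<and> xb \<in> U \<and>
     (\<forall>x\<in>U. f x = ereal (f0 x)) \<and>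
     (\<forall>x\<in>U. (f0 has_derivative (\<lambda>w. G x \<bullet> w)) (at x)) \<and>
     (\<forall>x\<in>U. (G has_derivative (\<lambda>w. H x *v w)) (at x)) \<and>
     continuous_on U H)"

definition reg_subdiff :: "'n::finite efun \<Rightarrow> real^'n \<Rightarrow> (real^'n) set" where
  "reg_subdiff h x = {v. h x \<noteq> \<infinity> \<and> h x \<noteq> -\<infinity> \<and>
     (\<forall>e>0. \<exists>d>0. \<forall>y. dist y x < d \<longrightarrow>
        ereal (real_of_ereal (h x) + v \<bullet> (y - x) - e * norm (y - x)) \<le> h y)}"

definition lim_subdiff :: "'n::finite efun \<Rightarrow> real^'n \<Rightarrow> (real^'n) set" where
  "lim_subdiff h x = {v. h x \<noteq> \<infinity> \<and> h x \<noteq> -\<infinity> \<and>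
     (\<exists>xs vs. (\<forall>k. vs k \<in> reg_subdiff h (xs k)) \<and> xs \<longlonglongrightarrow> x \<and> vs \<longlonglongrightarrow> v \<and>
        (\<lambda>k. h (xs k)) \<longlonglongrightarrow> h x)}"

definition sdq :: "'n::finite efun \<Rightarrow> real^'n \<Rightarrow> real^'n \<Rightarrow> real \<Rightarrow> real^'n \<Rightarrow> ereal" where
  "sdq h x v t w = (h (x + t *\<^sub>R w) - h x - ereal (t * (v \<bullet> w))) / ereal (t\<^sup>2 / 2)"

definition d2 :: "'n::finite efun \<Rightarrow> real^'n \<Rightarrow> real^'n \<Rightarrow> real^'n \<Rightarrow> ereal" where
  "d2 h x v w = Liminf (at_right 0 \<times>\<^sub>F nhds w) (\<lambda>(t, w'). sdq h x v t w')"

definition epi_conv :: "(nat \<Rightarrow> 'n::finite efun) \<Rightarrow> 'n efun \<Rightarrow> bool" where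
  "epi_conv phi p \<longleftrightarrow> (\<forall>w.
     (\<forall>ws. ws \<longlonglongrightarrow> w \<longrightarrow> p w \<le> liminf (\<lambda>k. phi k (ws k))) \<and>
     (\<exists>ws. ws \<longlonglongrightarrow> w \<and> limsup (\<lambda>k. phi k (ws k)) \<le> p w))"

definition twice_epi_diff :: "'n::finite efun \<Rightarrow> real^'n \<Rightarrow> real^'n \<Rightarrow> bool" where
  "twice_epi_diff h x v \<longleftrightarrow> (\<forall>ts. (\<forall>k. ts k > 0) \<longrightarrow> ts \<longlonglongrightarrow> 0 \<longrightarrow>
     epi_conv (\<lambda>k. sdq h x v (ts k)) (d2 h x v))"

definition qf :: "real^'n^'n \<Rightarrow> real^'n \<Rightarrow> real" where
  "qf A w = w \<bullet> (A *v w)"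

definition gen_quad_form :: "'n::finite efun \<Rightarrow> bool" where
  "gen_quad_form q \<longleftrightarrow> (\<exists>A L. transpose A = A \<and> subspace L \<and>
     q = (\<lambda>w. if w \<in> L then ereal (qf A w / 2) else \<infinity>))"

definition gen_twice_diff :: "'n::finite efun \<Rightarrow> real^'n \<Rightarrow> real^'n \<Rightarrow> bool" where
  "gen_twice_diff h x v \<longleftrightarrow> twice_epi_diff h x v \<and> gen_quad_form (d2 h x v)"

definition Omega :: "'n::finite efun \<Rightarrow> ((real^'n) \<times> (real^'n)) set" where
  "Omega h = {(x, v). v \<in> lim_subdiff h x \<and> gen_twice_diff h x v}"

definition quad :: "'n::finite efun \<Rightarrow> real^'n \<Rightarrow> real^'n \<Rightarrow> ('n efun) set" where
  "quad h xb vb = {q. gen_quad_form q \<and>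
     (\<exists>xs vs. (\<forall>k. (xs k, vs k) \<in> Omega h) \<and> xs \<longlonglongrightarrow> xb \<and> vs \<longlonglongrightarrow> vb \<and>
        (\<lambda>k. h (xs k)) \<longlonglongrightarrow> h xb \<and>
        epi_conv (\<lambda>k w. ereal (1/2) * d2 h (xs k) (vs k) w) q)}"

end

theory Submission
  imports Defs
begin

(*
  Near xb the function f + g differs from g by the C^2 function f0, so everything follows from
  one transfer principle: if k = h + phi near x with phi C^2, then subgradients shift by the
  gradient of phi, and the second-order difference quotients shift by the real quotients of phi,
  which converge to the quadratic form of the Hessian uniformly as t goes down to 0 and w' to w
  (Taylor's formula and continuity of the Hessian). Hence second subderivatives, twice
  epi-differentiability, generalized quadratic forms, the set Omega and finally the quadratic
  bundles are all shifted by the Hessian term. As h = k + (-phi) near x, the same principle gives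
  the reverse inclusion. The statement about f alone is the case g = 0, whose quadratic bundle at
  (xb, 0) is the zero form.
*)

section \<open>Epi-convergence\<close>

lemma Liminf_add_tendsto_le:
  fixes a :: "'a \<Rightarrow> ereal" and b :: "'a \<Rightarrow> real"
  assumes F: "F \<noteq> bot" and b: "(b \<longlongrightarrow> c) F"
  shows "Liminf F (\<lambda>z. ereal (b z) + a z) \<le> ereal c + Liminf F a"
proof (rule ereal_le_epsilon2)
  fix e :: real assume e: "0 < e"
  have "\<forall>\<^sub>F z in F. b z \<le> c + e"
    using tendstoD[OF b e] by eventually_elim (auto simp: dist_real_def)
  then have "Liminf F (\<lambda>z. ereal (b z) + a z) \<le> Liminf F (\<lambda>z. ereal (c + e) + a z)"
    by (intro Liminf_mono) (auto elim!: eventually_mono intro: add_right_mono)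
  also have "\<dots> = ereal (c + e) + Liminf F a"
    by (rule Liminf_add_ereal_left[OF F]) simp
  finally show "Liminf F (\<lambda>z. ereal (b z) + a z) \<le> ereal c + Liminf F a + ereal e"
    by (metis add.assoc add.commute plus_ereal.simps(1))
qed

lemma Liminf_add_tendsto:
  fixes a :: "'a \<Rightarrow> ereal" and b :: "'a \<Rightarrow> real"
  assumes F: "F \<noteq> bot" and b: "(b \<longlongrightarrow> c) F"
  shows "Liminf F (\<lambda>z. ereal (b z) + a z) = ereal c + Liminf F a"
proof (rule antisym)
  show "Liminf F (\<lambda>z. ereal (b z) + a z) \<le> ereal c + Liminf F a"
    by (rule Liminf_add_tendsto_le[OF assms])
  have "Liminf F a = Liminf F (\<lambda>z. ereal (- b z) + (ereal (b z) + a z))"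
    by (rule arg_cong[where f = "Liminf F"], rule ext, case_tac "a z") auto
  also have "\<dots> \<le> ereal (- c) + Liminf F (\<lambda>z. ereal (b z) + a z)"
    by (rule Liminf_add_tendsto_le[OF F]) (intro tendsto_minus b)
  finally show "ereal c + Liminf F a \<le> Liminf F (\<lambda>z. ereal (b z) + a z)"
    by (cases "Liminf F a"; cases "Liminf F (\<lambda>z. ereal (b z) + a z)") auto
qed

lemma ereal_half_add: "ereal (1/2) * (ereal r + d) = ereal (r / 2) + ereal (1/2) * d"
  by (cases d) auto

lemma epi_conv_unique:
  assumes "epi_conv phi p" and "epi_conv phi q"
  shows "p = q"
proof -
  have le: "p w \<le> q w" if p: "epi_conv phi p" and q: "epi_conv phi q" for p q w
  proof -
    obtain ws where ws: "ws \<longlonglongrightarrow> w" "limsup (\<lambda>j. phi j (ws j)) \<le> q w"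
      using q unfolding epi_conv_def by blast
    have "p w \<le> liminf (\<lambda>j. phi j (ws j))"
      using p ws(1) unfolding epi_conv_def by blast
    also have "\<dots> \<le> limsup (\<lambda>j. phi j (ws j))"
      by (rule Liminf_le_Limsup) simp
    finally show ?thesis using ws(2) by simp
  qed
  show ?thesis using le[OF assms] le[OF assms(2,1)] by (intro ext antisym)
qed

lemma epi_conv_ignore_initial_segment:
  fixes phi :: "nat \<Rightarrow> 'n::finite efun"
  assumes "epi_conv phi p"
  shows "epi_conv (\<lambda>j. phi (j + N)) p"
  unfolding epi_conv_def
proof (intro allI conjI impI)
  fix w and ws :: "nat \<Rightarrow> real^'n" assume ws: "ws \<longlonglongrightarrow> w"
  define ws' where "ws' j = ws (j - N)" for j
  have "ws' \<longlonglongrightarrow> w"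
    by (rule LIMSEQ_offset[where k = N]) (simp add: ws'_def ws)
  then have "p w \<le> liminf (\<lambda>j. phi j (ws' j))"
    using assms unfolding epi_conv_def by blast
  also have "\<dots> = liminf (\<lambda>j. phi (j + N) (ws j))"
    using liminf_shift_k[of "\<lambda>j. phi j (ws' j)" N] by (simp add: ws'_def)
  finally show "p w \<le> liminf (\<lambda>j. phi (j + N) (ws j))" .
next
  fix w
  obtain ws where ws: "ws \<longlonglongrightarrow> w" "limsup (\<lambda>j. phi j (ws j)) \<le> p w"
    using assms unfolding epi_conv_def by blast
  have "limsup (\<lambda>j. phi (j + N) (ws (j + N))) \<le> p w"
    using ws(2) limsup_shift_k[of "\<lambda>j. phi j (ws j)" N] by simp
  then show "\<exists>ws. ws \<longlonglongrightarrow> w \<and> limsup (\<lambda>j. phi (j + N) (ws j)) \<le> p w"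
    using LIMSEQ_ignore_initial_segment[OF ws(1), of N] by blast
qed

lemma epi_conv_add_tendsto:
  fixes phi chi :: "nat \<Rightarrow> 'n::finite efun" and psi :: "nat \<Rightarrow> real^'n \<Rightarrow> real"
  assumes epi: "epi_conv phi p"
    and eq: "\<And>ws w. ws \<longlonglongrightarrow> w \<Longrightarrow>
      \<forall>\<^sub>F j in sequentially. chi j (ws j) = ereal (psi j (ws j)) + phi j (ws j)"
    and lim: "\<And>ws w. ws \<longlonglongrightarrow> w \<Longrightarrow> (\<lambda>j. psi j (ws j)) \<longlonglongrightarrow> c w"
  shows "epi_conv chi (\<lambda>w. ereal (c w) + p w)"
  unfolding epi_conv_def
proof (intro allI conjI impI)
  fix w and ws :: "nat \<Rightarrow> real^'n" assume ws: "ws \<longlonglongrightarrow> w"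
  have "liminf (\<lambda>j. chi j (ws j)) = liminf (\<lambda>j. ereal (psi j (ws j)) + phi j (ws j))"
    by (rule Liminf_eq) (rule eq[OF ws])
  also have "\<dots> = ereal (c w) + liminf (\<lambda>j. phi j (ws j))"
    by (rule ereal_liminf_lim_add[OF tendsto_ereal[OF lim[OF ws]]]) simp
  finally show "ereal (c w) + p w \<le> liminf (\<lambda>j. chi j (ws j))"
    using epi ws unfolding epi_conv_def by (auto intro: add_left_mono)
next
  fix w
  obtain ws where ws: "ws \<longlonglongrightarrow> w" "limsup (\<lambda>j. phi j (ws j)) \<le> p w"
    using epi unfolding epi_conv_def by blast
  have "limsup (\<lambda>j. chi j (ws j)) = limsup (\<lambda>j. ereal (psi j (ws j)) + phi j (ws j))"
    by (rule Limsup_eq) (rule eq[OF ws(1)])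
  also have "\<dots> = ereal (c w) + limsup (\<lambda>j. phi j (ws j))"
    by (rule ereal_limsup_lim_add[OF tendsto_ereal[OF lim[OF ws(1)]]]) simp
  also have "\<dots> \<le> ereal (c w) + p w"
    using ws(2) by (rule add_left_mono)
  finally show "\<exists>ws. ws \<longlonglongrightarrow> w \<and> limsup (\<lambda>j. chi j (ws j)) \<le> ereal (c w) + p w"
    using ws(1) by blast
qed

lemma qf_scaleR_vector: "qf A (t *\<^sub>R w) = t\<^sup>2 * qf A w"
  by (simp add: qf_def matrix_vector_mult_scaleR power2_eq_square)

lemma qf_scaleR_matrix: "qf (c *\<^sub>R A) w = c * qf A w"
  by (simp add: qf_def scaleR_matrix_vector_assoc[symmetric])

lemma qf_uminus_matrix: "qf (- A) w = - qf A w"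
  using qf_scaleR_matrix[of "-1" A w] by simp

lemma qf_add_matrix: "qf (A + B) w = qf A w + qf B w"
  by (simp add: qf_def matrix_vector_mult_add_rdistrib inner_add_right)

lemma qf_transpose: "qf (transpose A) w = qf A w"
  by (simp add: qf_def dot_lmul_matrix[symmetric] inner_commute)

lemma tendsto_qf:
  assumes "(A \<longlongrightarrow> A0) F" and "(w \<longlongrightarrow> w0) F"
  shows "((\<lambda>z. qf (A z) (w z)) \<longlongrightarrow> qf A0 w0) F"
  unfolding qf_def inner_vec_def matrix_vector_mult_def
  by (intro tendsto_intros tendsto_vec_nth assms)

lemma gen_quad_form_add_qf:
  assumes "gen_quad_form p"
  shows "gen_quad_form (\<lambda>w. ereal (c * qf B w) + p w)"
proof -
  obtain A L where A: "transpose A = A" "subspace L"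
    and p: "p = (\<lambda>w. if w \<in> L then ereal (qf A w / 2) else \<infinity>)"
    using assms unfolding gen_quad_form_def by blast
  define A' where "A' = A + c *\<^sub>R (B + transpose B)"
  have "transpose A' = A'"
    using A(1) by (simp add: A'_def transpose_def vec_eq_iff)
  moreover have "qf A' w / 2 = c * qf B w + qf A w / 2" for w
    by (simp add: A'_def qf_add_matrix qf_scaleR_matrix qf_transpose algebra_simps)
  ultimately show ?thesis
    unfolding gen_quad_form_def using A(2)
    by (intro exI[of _ A'] exI[of _ L]) (auto simp: p)
qed

lemma lim_subdiffI_eventually:
  assumes "h x \<noteq> \<infinity>" "h x \<noteq> -\<infinity>"
    and "\<forall>\<^sub>F j in sequentially. vs j \<in> reg_subdiff h (xs j)"
    and "xs \<longlonglongrightarrow> x" "vs \<longlonglongrightarrow> v" "(\<lambda>j. h (xs j)) \<longlonglongrightarrow> h x"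
  shows "v \<in> lim_subdiff h x"
proof -
  obtain N where "\<And>j. j \<ge> N \<Longrightarrow> vs j \<in> reg_subdiff h (xs j)"
    using assms(3) unfolding eventually_sequentially by blast
  then show ?thesis
    unfolding lim_subdiff_def using assms(1,2) LIMSEQ_ignore_initial_segment[OF assms(4), of N]
      LIMSEQ_ignore_initial_segment[OF assms(5), of N] LIMSEQ_ignore_initial_segment[OF assms(6), of N]
    by (intro CollectI conjI exI[of _ "\<lambda>j. xs (j + N)"] exI[of _ "\<lambda>j. vs (j + N)"]) auto
qed

lemma quadI_eventually:
  assumes "gen_quad_form q"
    and "\<forall>\<^sub>F j in sequentially. (xs j, vs j) \<in> Omega h"
    and "xs \<longlonglongrightarrow> xb" "vs \<longlonglongrightarrow> vb" "(\<lambda>j. h (xs j)) \<longlonglongrightarrow> h xb"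
    and "epi_conv (\<lambda>j w. ereal (1/2) * d2 h (xs j) (vs j) w) q"
  shows "q \<in> quad h xb vb"
proof -
  obtain N where "\<And>j. j \<ge> N \<Longrightarrow> (xs j, vs j) \<in> Omega h"
    using assms(2) unfolding eventually_sequentially by blast
  then show ?thesis
    unfolding quad_def using assms(1) LIMSEQ_ignore_initial_segment[OF assms(3), of N]
      LIMSEQ_ignore_initial_segment[OF assms(4), of N] LIMSEQ_ignore_initial_segment[OF assms(5), of N]
      epi_conv_ignore_initial_segment[OF assms(6), of N]
    by (intro CollectI conjI exI[of _ "\<lambda>j. xs (j + N)"] exI[of _ "\<lambda>j. vs (j + N)"]) auto
qed

lemma reg_subdiff_add_differentiable:
  fixes h k :: "'n::finite efun"
  assumes v: "v \<in> reg_subdiff h x" and U: "open U" "x \<in> U"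
    and k: "\<And>y. y \<in> U \<Longrightarrow> k y = h y + ereal (phi y)"
    and phi: "(phi has_derivative (\<lambda>w. u \<bullet> w)) (at x)"
  shows "v + u \<in> reg_subdiff k x"
  unfolding reg_subdiff_def
proof (intro CollectI conjI allI impI)
  obtain c where c: "h x = ereal c"
    using v unfolding reg_subdiff_def by (cases "h x") auto
  have kx: "k x = ereal (c + phi x)"
    using k[OF U(2)] c by simp
  then show "k x \<noteq> \<infinity>" "k x \<noteq> -\<infinity>"
    by auto
  fix e :: real assume e: "0 < e"
  have "\<forall>e>0. \<exists>d>0. \<forall>y. dist y x < d \<longrightarrow>
      ereal (c + v \<bullet> (y - x) - e * norm (y - x)) \<le> h y"
    using v c unfolding reg_subdiff_def by simp
  then obtain d1 where d1: "d1 > 0" "\<And>y. dist y x < d1 \<Longrightarrow>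
      ereal (c + v \<bullet> (y - x) - e/2 * norm (y - x)) \<le> h y"
    using e by (meson half_gt_zero)
  have "\<forall>e>0. \<exists>d>0. \<forall>y. norm (y - x) < d \<longrightarrow>
      norm (phi y - phi x - u \<bullet> (y - x)) \<le> e * norm (y - x)"
    using phi unfolding has_derivative_at_alt by blast
  then obtain d2 where d2: "d2 > 0" "\<And>y. norm (y - x) < d2 \<Longrightarrow>
      norm (phi y - phi x - u \<bullet> (y - x)) \<le> e/2 * norm (y - x)"
    using e by (meson half_gt_zero)
  obtain d3 where d3: "d3 > 0" "ball x d3 \<subseteq> U"
    using U open_contains_ball by blast
  show "\<exists>d>0. \<forall>y. dist y x < d \<longrightarrow>
      ereal (real_of_ereal (k x) + (v + u) \<bullet> (y - x) - e * norm (y - x)) \<le> k y"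
  proof (intro exI[of _ "min d1 (min d2 d3)"] conjI allI impI)
    fix y assume y: "dist y x < min d1 (min d2 d3)"
    have "phi x + u \<bullet> (y - x) - e/2 * norm (y - x) \<le> phi y"
      using d2(2)[of y] y unfolding real_norm_def abs_le_iff by (simp add: dist_norm)
    then have "ereal (real_of_ereal (k x) + (v + u) \<bullet> (y - x) - e * norm (y - x))
        \<le> ereal (c + v \<bullet> (y - x) - e/2 * norm (y - x)) + ereal (phi y)"
      by (simp add: kx inner_add_left)
    also have "\<dots> \<le> h y + ereal (phi y)"
      using d1(2)[of y] y by (intro add_right_mono) simp
    also have "\<dots> = k y"
      using k[of y] y d3(2) by (auto simp: dist_commute)
    finally show "ereal (real_of_ereal (k x) + (v + u) \<bullet> (y - x) - e * norm (y - x)) \<le> k y" .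
  qed (use d1 d2 d3 in simp)
qed

section \<open>Perturbation by a \<open>C\<^sup>2\<close> function\<close>

definition sdq_real :: "(real^'n::finite \<Rightarrow> real) \<Rightarrow> real^'n \<Rightarrow> real^'n \<Rightarrow> real \<Rightarrow> real^'n \<Rightarrow> real"
  where "sdq_real phi x v t w = (phi (x + t *\<^sub>R w) - phi x - t * (v \<bullet> w)) / (t\<^sup>2 / 2)"

lemma sdq_add_real:
  assumes t: "t \<noteq> 0" and hx: "h x \<noteq> \<infinity>" "h x \<noteq> -\<infinity>"
  shows "sdq (\<lambda>y. h y + ereal (phi y)) x (v + u) t w = ereal (sdq_real phi x u t w) + sdq h x v t w"
proof -
  obtain c where c: "h x = ereal c"
    using hx by (cases "h x") auto
  have t2: "t\<^sup>2 / 2 > 0"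
    using t by simp
  show ?thesis
  proof (cases "h (x + t *\<^sub>R w)")
    case (real b)
    have "(b + phi (x + t *\<^sub>R w) - (c + phi x) - t * ((v + u) \<bullet> w)) / (t\<^sup>2 / 2)
        = (phi (x + t *\<^sub>R w) - phi x - t * (u \<bullet> w)) / (t\<^sup>2 / 2) + (b - c - t * (v \<bullet> w)) / (t\<^sup>2 / 2)"
      by (simp add: add_divide_distrib[symmetric] inner_add_left algebra_simps)
    then show ?thesis
      using t2 by (simp add: sdq_def sdq_real_def c real)
  qed (use t2 in \<open>simp_all add: sdq_def c\<close>)
qed

locale C2_on =
  fixes phi :: "real^'n::finite \<Rightarrow> real" and a :: "real^'n \<Rightarrow> real^'n"
    and B :: "real^'n \<Rightarrow> real^'n^'n" and U :: "(real^'n) set"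
  assumes open_U: "open U"
    and phi_deriv: "\<And>x. x \<in> U \<Longrightarrow> (phi has_derivative (\<lambda>w. a x \<bullet> w)) (at x)"
    and a_deriv: "\<And>x. x \<in> U \<Longrightarrow> (a has_derivative (\<lambda>w. B x *v w)) (at x)"
    and B_cont: "continuous_on U B"
begin

lemma isCont_phi: "x \<in> U \<Longrightarrow> isCont phi x"
  using phi_deriv has_derivative_continuous by blast

lemma isCont_a: "x \<in> U \<Longrightarrow> isCont a x"
  using a_deriv has_derivative_continuous by blast

lemma isCont_B: "x \<in> U \<Longrightarrow> isCont B x"
  using B_cont open_U continuous_on_eq_continuous_at by blast

lemma taylor_segment:
  assumes seg: "\<forall>s\<in>{0..1}. x + s *\<^sub>R d \<in> U"
  shows "\<exists>\<xi>\<in>{0..1}. phi (x + d) = phi x + a x \<bullet> d + qf (B (x + \<xi> *\<^sub>R d)) d / 2"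
proof -
  define diff where "diff m s = (if m = 0 then phi (x + s *\<^sub>R d)
      else if m = 1 then a (x + s *\<^sub>R d) \<bullet> d else qf (B (x + s *\<^sub>R d)) d)" for m :: nat and s
  have line: "((\<lambda>s. x + s *\<^sub>R d) has_derivative (\<lambda>r. r *\<^sub>R d)) (at s)" for s :: real
    by (auto intro!: derivative_eq_intros)
  have "DERIV (diff m) s :> diff (Suc m) s" if m: "m < 2" and s: "0 \<le> s" "s \<le> 1" for m s
  proof -
    have xs: "x + s *\<^sub>R d \<in> U"
      using seg s by auto
    consider "m = 0" | "m = 1"
      using m by force
    then show ?thesis
    proof cases
      case 1
      have "((\<lambda>s. phi (x + s *\<^sub>R d)) has_derivative (\<lambda>r. a (x + s *\<^sub>R d) \<bullet> (r *\<^sub>R d))) (at s)"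
        by (rule has_derivative_compose[OF line phi_deriv[OF xs]])
      moreover have "(\<lambda>r. a (x + s *\<^sub>R d) \<bullet> (r *\<^sub>R d)) = (*) (a (x + s *\<^sub>R d) \<bullet> d)"
        by (simp add: fun_eq_iff)
      ultimately show ?thesis
        using 1 by (simp add: has_field_derivative_def diff_def[abs_def])
    next
      case 2
      have "((\<lambda>s. a (x + s *\<^sub>R d)) has_derivative (\<lambda>r. B (x + s *\<^sub>R d) *v (r *\<^sub>R d))) (at s)"
        by (rule has_derivative_compose[OF line a_deriv[OF xs]])
      then have "((\<lambda>s. a (x + s *\<^sub>R d) \<bullet> d) has_derivative (\<lambda>r. (B (x + s *\<^sub>R d) *v (r *\<^sub>R d)) \<bullet> d)) (at s)"
        by (rule bounded_linear.has_derivative[OF bounded_linear_inner_left])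
      moreover have "(\<lambda>r. (B (x + s *\<^sub>R d) *v (r *\<^sub>R d)) \<bullet> d) = (*) (qf (B (x + s *\<^sub>R d)) d)"
        by (simp add: fun_eq_iff qf_def matrix_vector_mult_scaleR inner_commute)
      ultimately show ?thesis
        using 2 by (simp add: has_field_derivative_def diff_def[abs_def])
    qed
  qed
  then obtain \<xi> where "0 < \<xi>" "\<xi> < 1"
    "diff 0 1 = (\<Sum>m<2. diff m 0 / fact m * (1 - 0) ^ m) + diff 2 \<xi> / fact 2 * (1 - 0) ^ 2"
    using Taylor_up[of 2 diff "diff 0" 0 1 0] by auto
  then show ?thesis
    by (intro bexI[of _ \<xi>]) (simp_all add: diff_def numeral_2_eq_2)
qed

lemma eventually_segment_in_U:
  assumes x: "x \<in> U" and D: "(D \<longlongrightarrow> 0) F"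
  shows "\<forall>\<^sub>F z in F. \<forall>s\<in>{0..1}. x + s *\<^sub>R D z \<in> U"
proof -
  obtain r where r: "r > 0" "ball x r \<subseteq> U"
    using open_U x open_contains_ball by blast
  have "\<forall>\<^sub>F z in F. norm (D z) < r"
    using order_tendstoD(2)[OF tendsto_norm_zero[OF D] r(1)] .
  then show ?thesis
  proof eventually_elim
    case (elim z)
    have "norm (s *\<^sub>R D z) < r" if "s \<in> {0..1}" for s
      using elim that mult_left_le_one_le[of "norm (D z)" s] by auto
    then show ?case
      using r(2) by (auto simp: dist_norm)
  qed
qed

lemma sdq_real_mean_value:
  assumes t: "t \<noteq> 0" and seg: "\<forall>s\<in>{0..1}. x + s *\<^sub>R (t *\<^sub>R w) \<in> U"
  shows "\<exists>\<xi>\<in>{0..1}. sdq_real phi x (a x) t w = qf (B (x + \<xi> *\<^sub>R (t *\<^sub>R w))) w"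
proof -
  obtain \<xi> where \<xi>: "\<xi> \<in> {0..1}"
    and "phi (x + t *\<^sub>R w) = phi x + a x \<bullet> (t *\<^sub>R w) + qf (B (x + \<xi> *\<^sub>R (t *\<^sub>R w))) (t *\<^sub>R w) / 2"
    using taylor_segment[OF seg] by blast
  then have "sdq_real phi x (a x) t w = qf (B (x + \<xi> *\<^sub>R (t *\<^sub>R w))) w"
    using t by (simp add: sdq_real_def qf_scaleR_vector)
  then show ?thesis
    using \<xi> by blast
qed

lemma sdq_real_tendsto:
  assumes x: "x \<in> U" and T: "filterlim T (at_right 0) F" and W: "(W \<longlongrightarrow> w) F"
  shows "((\<lambda>z. sdq_real phi x (a x) (T z) (W z)) \<longlongrightarrow> qf (B x) w) F"
proof -
  have "(\<forall>\<^sub>F z in F. T z \<in> {0<..} \<and> T z \<noteq> 0) \<and> (T \<longlongrightarrow> 0) F"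
    using T unfolding filterlim_at .
  then have T0: "(T \<longlongrightarrow> 0) F" and Tpos: "\<forall>\<^sub>F z in F. T z \<noteq> 0"
    by (auto elim: eventually_mono)
  have D0: "((\<lambda>z. T z *\<^sub>R W z) \<longlongrightarrow> 0) F"
    using tendsto_scaleR[OF T0 W] by simp
  define Xi where "Xi z = (SOME \<xi>. \<xi> \<in> {0..1} \<and>
      sdq_real phi x (a x) (T z) (W z) = qf (B (x + \<xi> *\<^sub>R (T z *\<^sub>R W z))) (W z))" for z
  have Xi: "\<forall>\<^sub>F z in F. Xi z \<in> {0..1} \<and>
      sdq_real phi x (a x) (T z) (W z) = qf (B (x + Xi z *\<^sub>R (T z *\<^sub>R W z))) (W z)"
    using Tpos eventually_segment_in_U[OF x D0]
  proof eventually_elim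
    case (elim z)
    then have "\<exists>\<xi>. \<xi> \<in> {0..1} \<and>
        sdq_real phi x (a x) (T z) (W z) = qf (B (x + \<xi> *\<^sub>R (T z *\<^sub>R W z))) (W z)"
      using sdq_real_mean_value[of "T z" x "W z"] by blast
    then show ?case
      unfolding Xi_def by (rule someI_ex)
  qed
  have "\<forall>\<^sub>F z in F. norm (Xi z *\<^sub>R (T z *\<^sub>R W z)) \<le> norm (T z *\<^sub>R W z)"
    using Xi
  proof eventually_elim
    case (elim z)
    then have "\<bar>Xi z * T z\<bar> \<le> \<bar>T z\<bar>"
      by (simp add: abs_mult mult_left_le_one_le)
    then show ?case
      by (simp add: mult_right_mono)
  qed
  then have "((\<lambda>z. Xi z *\<^sub>R (T z *\<^sub>R W z)) \<longlongrightarrow> 0) F"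
    by (rule Lim_null_comparison) (rule tendsto_norm_zero[OF D0])
  then have "((\<lambda>z. x + Xi z *\<^sub>R (T z *\<^sub>R W z)) \<longlongrightarrow> x) F"
    using tendsto_add[OF tendsto_const, of _ 0 F x] by simp
  then have "((\<lambda>z. qf (B (x + Xi z *\<^sub>R (T z *\<^sub>R W z))) (W z)) \<longlongrightarrow> qf (B x) w) F"
    by (intro tendsto_qf W isCont_tendsto_compose[OF isCont_B[OF x]])
  then show ?thesis
    by (rule Lim_transform_eventually) (use Xi in \<open>auto elim: eventually_mono\<close>)
qed

end

lemma C2_on_uminus:
  assumes "C2_on phi a B U"
  shows "C2_on (\<lambda>y. - phi y) (\<lambda>y. - a y) (\<lambda>y. - B y) U"
proof -
  interpret C2_on phi a B U
    by (fact assms)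
  have "(- B x) *v w = - (B x *v w)" for x w
    using scaleR_matrix_vector_assoc[of "-1" "B x" w] by simp
  then show ?thesis
    using open_U has_derivative_minus[OF phi_deriv] has_derivative_minus[OF a_deriv]
      continuous_on_minus[OF B_cont]
    by unfold_locales simp_all
qed

locale C2_perturbation = C2_on +
  fixes h k :: "real^'n::finite \<Rightarrow> ereal"
  assumes perturb: "\<And>y. y \<in> U \<Longrightarrow> k y = h y + ereal (phi y)"
begin

lemma tendsto_perturb:
  assumes x: "x \<in> U" and xs: "xs \<longlonglongrightarrow> x" and hx: "(\<lambda>j. h (xs j)) \<longlonglongrightarrow> h x"
  shows "(\<lambda>j. k (xs j)) \<longlonglongrightarrow> k x"
proof -
  have "(\<lambda>j. h (xs j) + ereal (phi (xs j))) \<longlonglongrightarrow> h x + ereal (phi x)"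
    by (intro tendsto_add_ereal_general1 hx tendsto_ereal isCont_tendsto_compose[OF isCont_phi[OF x] xs]) simp
  moreover have "\<forall>\<^sub>F j in sequentially. h (xs j) + ereal (phi (xs j)) = k (xs j)"
    using topological_tendstoD[OF xs open_U x] by eventually_elim (simp add: perturb)
  ultimately show ?thesis
    using perturb[OF x] by (metis Lim_transform_eventually)
qed

lemma lim_subdiff_perturb:
  assumes x: "x \<in> U" and v: "v \<in> lim_subdiff h x"
  shows "v + a x \<in> lim_subdiff k x"
proof -
  obtain xs vs where reg: "\<And>j. vs j \<in> reg_subdiff h (xs j)" and xs: "xs \<longlonglongrightarrow> x"
    and vs: "vs \<longlonglongrightarrow> v" and hx: "(\<lambda>j. h (xs j)) \<longlonglongrightarrow> h x"
    using v unfolding lim_subdiff_def by blast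
  have fin: "h x \<noteq> \<infinity>" "h x \<noteq> -\<infinity>"
    using v unfolding lim_subdiff_def by auto
  show ?thesis
  proof (rule lim_subdiffI_eventually)
    show "k x \<noteq> \<infinity>" "k x \<noteq> -\<infinity>"
      using perturb[OF x] fin by auto
    show "\<forall>\<^sub>F j in sequentially. vs j + a (xs j) \<in> reg_subdiff k (xs j)"
      using topological_tendstoD[OF xs open_U x]
      by eventually_elim (rule reg_subdiff_add_differentiable[OF reg open_U _ perturb phi_deriv])
    show "(\<lambda>j. vs j + a (xs j)) \<longlonglongrightarrow> v + a x"
      by (intro tendsto_add vs isCont_tendsto_compose[OF isCont_a[OF x] xs])
  qed (fact xs, rule tendsto_perturb[OF x xs hx])
qed

lemma sdq_perturb_eventually:
  assumes x: "x \<in> U" and fin: "h x \<noteq> \<infinity>" "h x \<noteq> -\<infinity>"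
    and T: "filterlim T (at_right 0) F" and W: "(W \<longlongrightarrow> w) F"
  shows "\<forall>\<^sub>F z in F. sdq k x (v + a x) (T z) (W z)
    = ereal (sdq_real phi x (a x) (T z) (W z)) + sdq h x v (T z) (W z)"
proof -
  have "(\<forall>\<^sub>F z in F. T z \<in> {0<..} \<and> T z \<noteq> 0) \<and> (T \<longlongrightarrow> 0) F"
    using T unfolding filterlim_at .
  then have Tpos: "\<forall>\<^sub>F z in F. T z \<noteq> 0" and T0: "(T \<longlongrightarrow> 0) F"
    by (auto elim: eventually_mono)
  have "((\<lambda>z. T z *\<^sub>R W z) \<longlongrightarrow> 0) F"
    using tendsto_scaleR[OF T0 W] by simp
  from Tpos eventually_segment_in_U[OF x this] show ?thesis
  proof eventually_elim
    case (elim z)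
    then have "x + T z *\<^sub>R W z \<in> U"
      using bspec[OF elim(2), of 1] by simp
    then have "sdq k x (v + a x) (T z) (W z) = sdq (\<lambda>y. h y + ereal (phi y)) x (v + a x) (T z) (W z)"
      using x by (simp add: sdq_def perturb)
    also have "\<dots> = ereal (sdq_real phi x (a x) (T z) (W z)) + sdq h x v (T z) (W z)"
      using elim fin by (intro sdq_add_real) auto
    finally show ?case .
  qed
qed

lemma d2_perturb:
  assumes x: "x \<in> U" and fin: "h x \<noteq> \<infinity>" "h x \<noteq> -\<infinity>"
  shows "d2 k x (v + a x) w = ereal (qf (B x) w) + d2 h x v w"
proof -
  let ?F = "at_right (0::real) \<times>\<^sub>F nhds w"
  have T: "filterlim fst (at_right 0) ?F" and W: "(snd \<longlongrightarrow> w) ?F"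
    unfolding filterlim_def by (rule filtermap_fst_prod_filter filtermap_snd_prod_filter)+
  have "d2 k x (v + a x) w
      = Liminf ?F (\<lambda>z. ereal (sdq_real phi x (a x) (fst z) (snd z)) + sdq h x v (fst z) (snd z))"
    unfolding d2_def case_prod_unfold by (rule Liminf_eq) (rule sdq_perturb_eventually[OF x fin T W])
  also have "\<dots> = ereal (qf (B x) w) + d2 h x v w"
    unfolding d2_def case_prod_unfold
    by (rule Liminf_add_tendsto[OF _ sdq_real_tendsto[OF x T W]]) (simp add: prod_filter_eq_bot)
  finally show ?thesis .
qed

lemma twice_epi_diff_perturb:
  assumes x: "x \<in> U" and fin: "h x \<noteq> \<infinity>" "h x \<noteq> -\<infinity>" and h: "twice_epi_diff h x v"
  shows "twice_epi_diff k x (v + a x)"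
  unfolding twice_epi_diff_def
proof (intro allI impI)
  fix ts :: "nat \<Rightarrow> real" assume pos: "\<forall>j. 0 < ts j" and ts: "ts \<longlonglongrightarrow> 0"
  have T: "filterlim ts (at_right 0) sequentially"
    using ts pos by (intro tendsto_imp_filterlim_at_right) auto
  have "epi_conv (\<lambda>j. sdq k x (v + a x) (ts j)) (\<lambda>w. ereal (qf (B x) w) + d2 h x v w)"
  proof (rule epi_conv_add_tendsto[where psi = "\<lambda>j. sdq_real phi x (a x) (ts j)"])
    show "epi_conv (\<lambda>j. sdq h x v (ts j)) (d2 h x v)"
      using h pos ts unfolding twice_epi_diff_def by blast
    fix ws :: "nat \<Rightarrow> real^'n" and w assume ws: "ws \<longlonglongrightarrow> w"
    show "\<forall>\<^sub>F j in sequentially. sdq k x (v + a x) (ts j) (ws j)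
        = ereal (sdq_real phi x (a x) (ts j) (ws j)) + sdq h x v (ts j) (ws j)"
      by (rule sdq_perturb_eventually[OF x fin T ws])
    show "(\<lambda>j. sdq_real phi x (a x) (ts j) (ws j)) \<longlonglongrightarrow> qf (B x) w"
      by (rule sdq_real_tendsto[OF x T ws])
  qed
  moreover have "d2 k x (v + a x) = (\<lambda>w. ereal (qf (B x) w) + d2 h x v w)"
    using d2_perturb[OF x fin] by (simp add: fun_eq_iff)
  ultimately show "epi_conv (\<lambda>j. sdq k x (v + a x) (ts j)) (d2 k x (v + a x))"
    by simp
qed

lemma Omega_perturb:
  assumes x: "x \<in> U" and om: "(x, v) \<in> Omega h"
  shows "(x, v + a x) \<in> Omega k"
proof -
  have v: "v \<in> lim_subdiff h x" and h: "twice_epi_diff h x v" and q: "gen_quad_form (d2 h x v)"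
    using om unfolding Omega_def gen_twice_diff_def by auto
  then have fin: "h x \<noteq> \<infinity>" "h x \<noteq> -\<infinity>"
    unfolding lim_subdiff_def by auto
  have "d2 k x (v + a x) = (\<lambda>w. ereal (1 * qf (B x) w) + d2 h x v w)"
    using d2_perturb[OF x fin] by (simp add: fun_eq_iff)
  then have "gen_quad_form (d2 k x (v + a x))"
    using gen_quad_form_add_qf[OF q, of 1 "B x"] by simp
  then show ?thesis
    using lim_subdiff_perturb[OF x v] twice_epi_diff_perturb[OF x fin h]
    unfolding Omega_def gen_twice_diff_def by simp
qed

lemma quad_perturb:
  assumes xb: "xb \<in> U" and p: "p \<in> quad h xb vb"
  shows "(\<lambda>w. ereal (qf (B xb) w / 2) + p w) \<in> quad k xb (vb + a xb)"
proof -
  obtain xs vs where gp: "gen_quad_form p" and om: "\<And>j. (xs j, vs j) \<in> Omega h"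
    and xs: "xs \<longlonglongrightarrow> xb" and vs: "vs \<longlonglongrightarrow> vb" and hx: "(\<lambda>j. h (xs j)) \<longlonglongrightarrow> h xb"
    and ep: "epi_conv (\<lambda>j w. ereal (1/2) * d2 h (xs j) (vs j) w) p"
    using p unfolding quad_def by blast
  have fin: "h (xs j) \<noteq> \<infinity>" "h (xs j) \<noteq> -\<infinity>" for j
    using om[of j] unfolding Omega_def lim_subdiff_def by auto
  have U_ev: "\<forall>\<^sub>F j in sequentially. xs j \<in> U"
    using topological_tendstoD[OF xs open_U xb] .
  show ?thesis
  proof (rule quadI_eventually)
    show "gen_quad_form (\<lambda>w. ereal (qf (B xb) w / 2) + p w)"
      using gen_quad_form_add_qf[OF gp, of "1/2" "B xb"] by simp
    show "\<forall>\<^sub>F j in sequentially. (xs j, vs j + a (xs j)) \<in> Omega k"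
      using U_ev by eventually_elim (rule Omega_perturb[OF _ om])
    show "(\<lambda>j. vs j + a (xs j)) \<longlonglongrightarrow> vb + a xb"
      by (intro tendsto_add vs isCont_tendsto_compose[OF isCont_a[OF xb] xs])
    show "epi_conv (\<lambda>j w. ereal (1/2) * d2 k (xs j) (vs j + a (xs j)) w)
        (\<lambda>w. ereal (qf (B xb) w / 2) + p w)"
    proof (rule epi_conv_add_tendsto[OF ep, where psi = "\<lambda>j w. qf (B (xs j)) w / 2"])
      fix ws :: "nat \<Rightarrow> real^'n" and w assume ws: "ws \<longlonglongrightarrow> w"
      show "\<forall>\<^sub>F j in sequentially. ereal (1/2) * d2 k (xs j) (vs j + a (xs j)) (ws j)
          = ereal (qf (B (xs j)) (ws j) / 2) + ereal (1/2) * d2 h (xs j) (vs j) (ws j)"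
        using U_ev by eventually_elim (simp add: d2_perturb fin ereal_half_add)
      show "(\<lambda>j. qf (B (xs j)) (ws j) / 2) \<longlonglongrightarrow> qf (B xb) w / 2"
        by (intro tendsto_divide tendsto_const tendsto_qf ws isCont_tendsto_compose[OF isCont_B[OF xb] xs]) simp
    qed
  qed (fact xs, rule tendsto_perturb[OF xb xs hx])
qed

end

lemma reg_subdiff_zero: "reg_subdiff (\<lambda>_. 0) (x :: real^'n::finite) = {0}"
proof (intro set_eqI iffI)
  fix v assume v: "v \<in> reg_subdiff (\<lambda>_. 0) x"
  show "v \<in> {0}"
  proof (rule ccontr)
    assume "v \<notin> {0}"
    then have nv: "norm v > 0" by simp
    have "\<forall>e>0. \<exists>d>0. \<forall>y. dist y x < d \<longrightarrow> ereal (v \<bullet> (y - x) - e * norm (y - x)) \<le> 0"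
      using v unfolding reg_subdiff_def by simp
    then obtain d where d: "d > 0"
      "\<And>y. dist y x < d \<Longrightarrow> ereal (v \<bullet> (y - x) - norm v / 2 * norm (y - x)) \<le> 0"
      using nv by (meson half_gt_zero)
    define s where "s = d / (2 * norm v)"
    have s: "s > 0" "s * norm v < d"
      using d(1) nv by (simp_all add: s_def)
    have "v \<bullet> (s *\<^sub>R v) - norm v / 2 * norm (s *\<^sub>R v) \<le> 0"
      using d(2)[of "x + s *\<^sub>R v"] s by (simp add: dist_norm)
    moreover have "v \<bullet> (s *\<^sub>R v) - norm v / 2 * norm (s *\<^sub>R v) = s * (norm v)\<^sup>2 / 2"
      using s(1) by (simp add: dot_square_norm power2_eq_square)
    moreover have "s * (norm v)\<^sup>2 / 2 > 0"
      using s(1) nv by simp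
    ultimately show False
      by linarith
  qed
next
  fix v :: "real^'n" assume "v \<in> {0}"
  then show "v \<in> reg_subdiff (\<lambda>_. 0) x"
    unfolding reg_subdiff_def by (auto intro!: exI[of _ 1])
qed

lemma lim_subdiff_zero: "lim_subdiff (\<lambda>_. 0) (x :: real^'n::finite) = {0}"
proof (intro set_eqI iffI)
  fix v assume "v \<in> lim_subdiff (\<lambda>_. 0) x"
  then obtain xs vs where "\<And>j. vs j \<in> reg_subdiff (\<lambda>_. 0) (xs j)" and vs: "vs \<longlonglongrightarrow> v"
    unfolding lim_subdiff_def by blast
  then have "vs = (\<lambda>_. 0)"
    by (auto simp: reg_subdiff_zero fun_eq_iff)
  then show "v \<in> {0}"
    using vs by (simp add: LIMSEQ_const_iff)
next
  fix v :: "real^'n" assume "v \<in> {0}"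
  then show "v \<in> lim_subdiff (\<lambda>_. 0) x"
    unfolding lim_subdiff_def reg_subdiff_zero
    by (intro CollectI conjI exI[of _ "\<lambda>_. x"] exI[of _ "\<lambda>_. 0"] allI) simp_all
qed

lemma d2_zero: "d2 (\<lambda>_. 0) x 0 = (\<lambda>w. 0)"
  unfolding d2_def sdq_def by (simp add: prod_filter_eq_bot case_prod_unfold Liminf_const)

lemma epi_conv_zero: "epi_conv (\<lambda>j w. 0) (\<lambda>w. 0)"
  unfolding epi_conv_def by (auto simp: Liminf_const Limsup_const intro!: exI[of _ "\<lambda>_. w" for w])

lemma gen_quad_form_zero: "gen_quad_form (\<lambda>w. 0)"
  unfolding gen_quad_form_def
  by (intro exI[of _ 0] exI[of _ UNIV]) (auto simp: qf_def zero_ereal_def transpose_def vec_eq_iff)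

lemma Omega_zero: "(x, 0) \<in> Omega (\<lambda>_. 0)"
proof -
  have "sdq (\<lambda>_. 0) x 0 t = (\<lambda>w. 0)" for t
    by (simp add: sdq_def fun_eq_iff)
  then have "twice_epi_diff (\<lambda>_. 0) x 0"
    unfolding twice_epi_diff_def d2_zero by (simp add: epi_conv_zero)
  then show ?thesis
    unfolding Omega_def gen_twice_diff_def lim_subdiff_zero by (simp add: d2_zero gen_quad_form_zero)
qed

lemma quad_zero: "quad (\<lambda>_. 0) (xb :: real^'n::finite) 0 = {\<lambda>w. 0}"
proof (intro set_eqI iffI)
  fix q assume "q \<in> quad (\<lambda>_. 0) xb 0"
  then obtain xs vs where om: "\<And>j. (xs j, vs j) \<in> Omega (\<lambda>_. 0)"
    and ep: "epi_conv (\<lambda>j w. ereal (1/2) * d2 (\<lambda>_. 0) (xs j) (vs j) w) q"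
    unfolding quad_def by blast
  have "vs j = 0" for j
    using om[of j] unfolding Omega_def lim_subdiff_zero by simp
  then have "epi_conv (\<lambda>j w. 0) q"
    using ep by (simp add: d2_zero)
  then show "q \<in> {\<lambda>w. 0}"
    using epi_conv_unique epi_conv_zero by blast
next
  fix q :: "'n efun" assume "q \<in> {\<lambda>w. 0}"
  then have q: "q = (\<lambda>w. 0)"
    by simp
  show "q \<in> quad (\<lambda>_. 0) xb 0"
    unfolding q quad_def
    by (rule CollectI, rule conjI[OF gen_quad_form_zero], rule exI[of _ "\<lambda>_. xb"], rule exI[of _ "\<lambda>_. 0"])
       (simp add: Omega_zero d2_zero epi_conv_zero)
qed

section \<open>The sum rule\<close>

lemma C2_aroundE:
  assumes "C2_around f xb G H"
  obtains f0 U where "C2_on f0 G H U" "xb \<in> U" "\<And>x. x \<in> U \<Longrightarrow> f x = ereal (f0 x)"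
  using assms unfolding C2_around_def by (metis C2_on.intro)

lemma C2_perturbation_add:
  assumes "C2_on f0 G H U" and "\<And>x. x \<in> U \<Longrightarrow> f x = ereal (f0 x)"
  shows "C2_perturbation f0 G H U g (\<lambda>x. f x + g x)"
  using assms by (intro C2_perturbation.intro C2_perturbation_axioms.intro) (simp_all add: add.commute)

lemma quad_add_C2:
  assumes C2: "C2_on f0 G H U" and xb: "xb \<in> U" and f: "\<And>x. x \<in> U \<Longrightarrow> f x = ereal (f0 x)"
  shows "quad (\<lambda>x. f x + g x) xb (G xb + vb)
    = {(\<lambda>w. ereal (qf (H xb) w / 2) + p w) | p. p \<in> quad g xb vb}"
proof (intro set_eqI iffI)
  interpret sum: C2_perturbation f0 G H U g "\<lambda>x. f x + g x"
    by (rule C2_perturbation_add[OF C2 f])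
  fix q
  assume "q \<in> {(\<lambda>w. ereal (qf (H xb) w / 2) + p w) | p. p \<in> quad g xb vb}"
  then show "q \<in> quad (\<lambda>x. f x + g x) xb (G xb + vb)"
    using sum.quad_perturb[OF xb] by (auto simp: add.commute)
next
  have "g x = f x + g x + ereal (- f0 x)" if "x \<in> U" for x
    using f[OF that] by (cases "g x") auto
  then interpret diff: C2_perturbation "\<lambda>x. - f0 x" "\<lambda>x. - G x" "\<lambda>x. - H x" U "\<lambda>x. f x + g x" g
    using C2_on_uminus[OF C2] by (intro C2_perturbation.intro C2_perturbation_axioms.intro)
  fix q assume "q \<in> quad (\<lambda>x. f x + g x) xb (G xb + vb)"
  define p where "p w = ereal (qf (- H xb) w / 2) + q w" for w
  have "p \<in> quad g xb vb"
    using diff.quad_perturb[OF xb \<open>q \<in> _\<close>] by (simp add: p_def[abs_def])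
  moreover have "q = (\<lambda>w. ereal (qf (H xb) w / 2) + p w)"
  proof
    fix w
    show "q w = ereal (qf (H xb) w / 2) + p w"
      unfolding p_def by (cases "q w") (simp_all add: qf_uminus_matrix)
  qed
  ultimately show "q \<in> {(\<lambda>w. ereal (qf (H xb) w / 2) + p w) | p. p \<in> quad g xb vb}"
    by blast
qed

theorem theorem6p6:
  fixes f g :: "real^'n::finite \<Rightarrow> ereal" and xb vb :: "real^'n"
    and G :: "real^'n \<Rightarrow> real^'n" and H :: "real^'n \<Rightarrow> real^'n^'n"
  assumes "C2_around f xb G H"
    and "proper_fun g" and "lsc_fun g"
    and "vb \<in> lim_subdiff g xb"
  shows "G xb + vb \<in> lim_subdiff (\<lambda>x. f x + g x) xb
    \<and> quad (\<lambda>x. f x + g x) xb (G xb + vb)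
        = {(\<lambda>w. ereal (qf (H xb) w / 2) + p w) | p. p \<in> quad g xb vb}
    \<and> quad f xb (G xb) = {(\<lambda>w. ereal (1/2) * d2 f xb (G xb) w)}
    \<and> {(\<lambda>w. ereal (1/2) * d2 f xb (G xb) w)} = {(\<lambda>w. ereal (qf (H xb) w / 2))}"
proof -
  obtain f0 U where C2: "C2_on f0 G H U" and xb: "xb \<in> U" and f: "\<And>x. x \<in> U \<Longrightarrow> f x = ereal (f0 x)"
    using assms(1) by (erule C2_aroundE)
  interpret sum: C2_perturbation f0 G H U g "\<lambda>x. f x + g x"
    by (rule C2_perturbation_add[OF C2 f])
  interpret f: C2_perturbation f0 G H U "\<lambda>_. 0" f
    using C2_perturbation_add[OF C2 f, of "\<lambda>_. 0"] by simp
  have "G xb + vb \<in> lim_subdiff (\<lambda>x. f x + g x) xb"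
    using sum.lim_subdiff_perturb[OF xb assms(4)] by (simp add: add.commute)
  moreover have "quad f xb (G xb) = {\<lambda>w. ereal (qf (H xb) w / 2)}"
    using quad_add_C2[OF C2 xb f, of "\<lambda>_. 0" 0] by (simp add: quad_zero)
  moreover have "(\<lambda>w. ereal (1/2) * d2 f xb (G xb) w) = (\<lambda>w. ereal (qf (H xb) w / 2))"
    using f.d2_perturb[OF xb, of 0] by (simp add: d2_zero)
  ultimately show ?thesis
    using quad_add_C2[OF C2 xb f] by simp
qed

end
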